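(* Let $f\in F$ be strongly positive and let $w=x_{i_m}\cdots x_{i_1}$ ($i_k\ge1$) be any expression for $f$ as a product of $x_1,x_2,\dots$. Consider rewriting $w$ by repeatedly applying operations that replace a subword $x_kx_n$ with $k<n-1$ by $x_{n-1}x_k$ (which is valid in $F$). Then any sequence of such operations has at most $\binom{c(f)}{2}$ steps, and when no operation is applicable the resulting word is the anti-normal form of $f$, i.e. the unique expression $x_{j_m}\cdots x_{j_1}$ of $f$ with $j_{k+1}\ge j_k-1$ for all $k$.
   Context: Thompson's group $F=\langle x_0,x_1,x_2,\dots\mid x_nx_k=x_kx_{n+1}\text{ for }k<n\rangle$. An element is strongly positive if it lies in the submonoid generated by $x_1,x_2,\dots$. Every strongly positive $f$ has a unique expression $x_{j_m}\cdots x_{j_1}$ ($j_k\ge1$) with $j_{k+1}\ge j_k-1$ for all $k$ (its anti-normal form). $c(f)$ denotes the number of letters in any expression of $f$ as a product of $x_1,x_2,\dots$ (this number is independent of the expression since all relations are length-preserving; it equals the number of carets in the reduced forest diagram of $f$). *)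

theory Defs
  imports Main
begin

text \<open>A letter is (i, True) for x_i and (i, False) for x_i^{-1}.  A word
  is read left to right, so the list [a, b, c] denotes the product a b c.\<close>

type_synonym fword = "(nat \<times> bool) list"

text \<open>Equality in F = < x_0, x_1, ... | x_n x_k = x_k x_{n+1} (k < n) >:
  the smallest congruence on words containing free cancellation and the
  defining relations.\<close>

inductive F_eq :: "fword \<Rightarrow> fword \<Rightarrow> bool" where
  refl: "F_eq u u"
| sym: "F_eq u v \<Longrightarrow> F_eq v u"
| trans: "F_eq u v \<Longrightarrow> F_eq v w \<Longrightarrow> F_eq u w"
| cancel1: "F_eq (a @ [(i, True), (i, False)] @ b) (a @ b)"
| cancel2: "F_eq (a @ [(i, False), (i, True)] @ b) (a @ b)"
| rel: "k < n \<Longrightarrow> F_eq (a @ [(n, True), (k, True)] @ b) (a @ [(k, True), (Suc n, True)] @ b)"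

text \<open>A positive word x_{i_m} ... x_{i_1} is represented by the list [i_m, ..., i_1].\<close>

definition pos_word :: "nat list \<Rightarrow> fword" where
  "pos_word w = map (\<lambda>i. (i, True)) w"

definition rw_step :: "nat list \<Rightarrow> nat list \<Rightarrow> bool" where
  "rw_step u v \<longleftrightarrow> (\<exists>a b k n. u = a @ [k, n] @ b \<and> k + 1 < n \<and> v = a @ [n - 1, k] @ b)"

definition anti_normal :: "nat list \<Rightarrow> bool" where
  "anti_normal v \<longleftrightarrow> (\<forall>j\<in>set v. 1 \<le> j) \<and>
     (\<forall>i. Suc i < length v \<longrightarrow> int (v ! (Suc i)) - 1 \<le> int (v ! i))"

end

theory Submission
  imports Defs
begin

text \<open>Tag every letter of the initial word with its position. A rewriting step moves a letter
  x_n one place to the left across a letter x_k and so creates an inversion of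
  the tags. The key invariant is that an inverted pair is never swapped back: if a letter
  tagged q stands to the left of a letter tagged p < q, the index of the latter is smaller
  than the index of the former plus the number of letters between them whose tag is below p.
  For adjacent letters this forbids the step that would undo the inversion. Hence every step
  adds exactly one inversion, and a word of length m has at most (m choose 2) of them. A word to which no
  step applies is in anti-normal form by definition, and each step is a defining relation
  of F.\<close>

text \<open>A letter is a pair (tag, index): the index i stands for x_i, the tag is the letter's
  position in the initial word.\<close>

type_synonym tagged_word = "(nat \<times> nat) list"

definition tags_below :: "nat \<Rightarrow> tagged_word \<Rightarrow> nat" where
  "tags_below t L = length (filter (\<lambda>z. fst z < t) L)"

lemma tags_below_Nil [simp]: "tags_below t [] = 0"
  and tags_below_Cons [simp]: "tags_below t (x # L) = (if fst x < t then 1 else 0) + tags_below t L"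
  and tags_below_append [simp]: "tags_below t (L @ M) = tags_below t L + tags_below t M"
  by (simp_all add: tags_below_def)

lemma tags_below_le_length: "tags_below t L \<le> length L"
  by (simp add: tags_below_def)

text \<open>The letters of L with a smaller tag than x are those that x has overtaken.\<close>

definition inversion_bound :: "nat \<times> nat \<Rightarrow> tagged_word \<Rightarrow> bool" where
  "inversion_bound x L \<longleftrightarrow> (\<forall>j<length L. fst (L!j) < fst x \<longrightarrow>
      snd (L!j) + 1 \<le> snd x + tags_below (fst (L!j)) (take j L))"

fun inversion_bounded :: "tagged_word \<Rightarrow> bool" where
  "inversion_bounded [] = True"
| "inversion_bounded (x # L) = (inversion_bound x L \<and> inversion_bounded L)"

fun inversions :: "tagged_word \<Rightarrow> nat" where
  "inversions [] = 0"
| "inversions (x # L) = tags_below (fst x) L + inversions L"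

lemma inversions_le_choose_2: "inversions L \<le> length L choose 2"
proof (induction L)
  case Nil
  then show ?case by simp
next
  case (Cons x L)
  have "Suc (length L) choose 2 = length L + (length L choose 2)"
    by (simp add: numeral_2_eq_2)
  with Cons tags_below_le_length[of "fst x" L] show ?case by simp
qed

lemma tags_below_eq_0:
  assumes "\<forall>y\<in>set L. t \<le> fst y"
  shows "tags_below t L = 0"
  using assms by (simp add: tags_below_def filter_empty_conv not_less)

lemma sorted_inversions_eq_0: "sorted (map fst L) \<Longrightarrow> inversions L = 0"
  by (induction L) (simp_all add: tags_below_eq_0)

lemma sorted_inversion_bounded: "sorted (map fst L) \<Longrightarrow> inversion_bounded L"
  by (induction L) (auto simp: inversion_bound_def, metis nth_mem leD)

lemma inversions_swap:
  assumes "p < q"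
  shows "inversions (a @ [(q, n'), (p, k)] @ b) = Suc (inversions (a @ [(p, k), (q, n)] @ b))"
  using assms by (induction a) auto

lemma inversion_bound_adjacent_tag_less:
  assumes "inversion_bound (p, k) ((q, n) # b)" "k + 1 < n" "p \<noteq> q"
  shows "p < q"
  using assms by (force simp: inversion_bound_def)

lemma inversion_bounded_adjacent_tag_less:
  assumes "inversion_bounded (a @ [(p, k), (q, n)] @ b)" "k + 1 < n" "p \<noteq> q"
  shows "p < q"
  using assms by (induction a) (auto intro: inversion_bound_adjacent_tag_less)

lemma inversion_bound_Cons_drop:
  assumes "inversion_bound (p, k) ((q, n) # b)" "p < q"
  shows "inversion_bound (p, k) b"
  unfolding inversion_bound_def
proof (intro allI impI)
  fix j assume j: "j < length b" and below: "fst (b!j) < fst (p, k)"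
  have "snd (((q, n) # b) ! Suc j) + 1
      \<le> k + tags_below (fst (((q, n) # b) ! Suc j)) (take (Suc j) ((q, n) # b))"
    using assms(1)[unfolded inversion_bound_def, rule_format, of "Suc j"] j below by simp
  then show "snd (b!j) + 1 \<le> snd (p, k) + tags_below (fst (b!j)) (take j b)"
    using below assms(2) by simp
qed

lemma inversion_bound_swapped:
  assumes bound_p: "inversion_bound (p, k) ((q, n) # b)" and bound_q: "inversion_bound (q, n) b"
    and "p < q" "k + 1 < n" "p \<notin> fst ` set b"
  shows "inversion_bound (q, n - 1) ((p, k) # b)"
  unfolding inversion_bound_def
proof (intro allI impI)
  fix j assume j: "j < length ((p, k) # b)" and below: "fst (((p, k) # b) ! j) < fst (q, n - 1)"
  show "snd (((p, k) # b) ! j) + 1 \<le> snd (q, n - 1) + tags_below (fst (((p, k) # b) ! j)) (take j ((p, k) # b))"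
  proof (cases j)
    case 0
    then show ?thesis using \<open>k + 1 < n\<close> by simp
  next
    case (Suc i)
    have i: "i < length b" using j Suc by simp
    have "fst (b!i) < q" using below Suc by simp
    then have from_q: "snd (b!i) + 1 \<le> n + tags_below (fst (b!i)) (take i b)"
      using bound_q i unfolding inversion_bound_def by auto
    have "fst (b!i) \<noteq> p" using \<open>p \<notin> fst ` set b\<close> i by (metis nth_mem image_eqI)
    then consider "p < fst (b!i)" | "fst (b!i) < p" by linarith
    then show ?thesis
    proof cases
      case 1
      then show ?thesis using from_q Suc \<open>k + 1 < n\<close> by simp
    next
      case 2
      have "snd (((q, n) # b) ! Suc i) + 1
          \<le> k + tags_below (fst (((q, n) # b) ! Suc i)) (take (Suc i) ((q, n) # b))"
        using bound_p[unfolded inversion_bound_def, rule_format, of "Suc i"] i 2 by simp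
      then show ?thesis using Suc 2 \<open>p < q\<close> \<open>k + 1 < n\<close> by simp
    qed
  qed
qed

lemma inversion_bound_swap_inside:
  assumes bound: "inversion_bound x (a @ [(p, k), (q, n)] @ b)" and "p < q" "k + 1 < n"
  shows "inversion_bound x (a @ [(q, n - 1), (p, k)] @ b)"
  unfolding inversion_bound_def
proof (intro allI impI)
  let ?L = "a @ [(p, k), (q, n)] @ b"
  let ?M = "a @ [(q, n - 1), (p, k)] @ b"
  fix j assume j: "j < length ?M" and below: "fst (?M!j) < fst x"
  have L: "snd (?L!i) + 1 \<le> snd x + tags_below (fst (?L!i)) (take i ?L)"
    if "i < length ?L" "fst (?L!i) < fst x" for i
    using bound that unfolding inversion_bound_def by blast
  consider "j < length a" | "j = length a" | "j = Suc (length a)"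
    | i where "j = Suc (Suc (length a)) + i" by (metis less_Suc_eq not_less_eq less_imp_Suc_add)
  then show "snd (?M!j) + 1 \<le> snd x + tags_below (fst (?M!j)) (take j ?M)"
  proof cases
    case 1
    then show ?thesis using L[of j] below by (simp add: nth_append)
  next
    case 2
    then show ?thesis using L[of "Suc (length a)"] below \<open>p < q\<close> \<open>k + 1 < n\<close> by (simp add: nth_append)
  next
    case 3
    then show ?thesis using L[of "length a"] below \<open>p < q\<close> by (simp add: nth_append)
  next
    case 4
    then show ?thesis using L[of j] below j by (simp add: nth_append)
  qed
qed

lemma inversion_bounded_swap:
  assumes "inversion_bounded (a @ [(p, k), (q, n)] @ b)" "p < q" "k + 1 < n"
    and "distinct (map fst (a @ [(p, k), (q, n)] @ b))"
  shows "inversion_bounded (a @ [(q, n - 1), (p, k)] @ b)"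
  using assms
proof (induction a)
  case Nil
  then have "inversion_bound (p, k) ((q, n) # b)" "inversion_bound (q, n) b"
    "inversion_bounded b" "p \<notin> fst ` set b" by auto
  then show ?case
    using inversion_bound_swapped inversion_bound_Cons_drop Nil(2,3) by simp
next
  case Cons
  then show ?case using inversion_bound_swap_inside by simp
qed

lemma rw_step_tagged:
  assumes step: "rw_step (map snd L) v" and "inversion_bounded L" "distinct (map fst L)"
  obtains M where "length M = length L" "map snd M = v" "inversion_bounded M"
    "distinct (map fst M)" "inversions M = Suc (inversions L)"
proof -
  from step obtain a b k n where split: "map snd L = a @ [k, n] @ b" and "k + 1 < n"
    and v: "v = a @ [n - 1, k] @ b" unfolding rw_step_def by blast
  from split obtain a' b' p q where L: "L = a' @ [(p, k), (q, n)] @ b'"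
    and "map snd a' = a" "map snd b' = b"
    by (auto simp: map_eq_append_conv map_eq_Cons_conv)
  have "p \<noteq> q" using \<open>distinct (map fst L)\<close> L by simp
  then have "p < q"
    using inversion_bounded_adjacent_tag_less \<open>inversion_bounded L\<close> L \<open>k + 1 < n\<close> by blast
  let ?M = "a' @ [(q, n - 1), (p, k)] @ b'"
  show thesis
  proof
    show "length ?M = length L" "map snd ?M = v"
      using L v \<open>map snd a' = a\<close> \<open>map snd b' = b\<close> by simp_all
    show "inversion_bounded ?M"
      using inversion_bounded_swap assms(2,3) L \<open>p < q\<close> \<open>k + 1 < n\<close> by simp
    show "distinct (map fst ?M)" using assms(3) L by auto
    show "inversions ?M = Suc (inversions L)" using inversions_swap[OF \<open>p < q\<close>] L by simp
  qed
qed

lemma relpowp_rw_step_tagged: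
  assumes "(rw_step ^^ s) (map snd L) v" "inversion_bounded L" "distinct (map fst L)"
  shows "\<exists>M. length M = length L \<and> map snd M = v \<and> inversion_bounded M
    \<and> distinct (map fst M) \<and> inversions M = inversions L + s"
  using assms(1)
proof (induction s arbitrary: v)
  case 0
  then show ?case using assms(2,3) by auto
next
  case (Suc s)
  then obtain u where "(rw_step ^^ s) (map snd L) u" "rw_step u v" by auto
  with Suc.IH obtain M where "length M = length L" "map snd M = u" "inversion_bounded M"
    "distinct (map fst M)" "inversions M = inversions L + s" by blast
  with \<open>rw_step u v\<close> show ?case by (metis rw_step_tagged add_Suc_right)
qed

lemma relpowp_rw_step_le_choose_2:
  assumes "(rw_step ^^ s) w v"
  shows "s \<le> length w choose 2"
proof -
  let ?L = "zip [0..<length w] w"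
  have "sorted (map fst ?L)" by simp
  then have "inversion_bounded ?L" "inversions ?L = 0"
    by (simp_all add: sorted_inversion_bounded sorted_inversions_eq_0)
  moreover have "distinct (map fst ?L)" "map snd ?L = w" by simp_all
  ultimately obtain M where "length M = length w" "inversions M = s"
    using relpowp_rw_step_tagged[of s ?L v] assms by auto
  then show ?thesis using inversions_le_choose_2[of M] by simp
qed

lemma rw_step_F_eq:
  assumes "rw_step u v"
  shows "F_eq (pos_word v) (pos_word u)"
proof -
  from assms obtain a b k n where u: "u = a @ [k, n] @ b" and "k + 1 < n"
    and v: "v = a @ [n - 1, k] @ b" unfolding rw_step_def by blast
  then have "F_eq (pos_word a @ [(n - 1, True), (k, True)] @ pos_word b)
      (pos_word a @ [(k, True), (Suc (n - 1), True)] @ pos_word b)"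
    by (intro F_eq.rel) simp
  moreover have "Suc (n - 1) = n" using \<open>k + 1 < n\<close> by simp
  ultimately show ?thesis using u v by (simp add: pos_word_def)
qed

lemma rtranclp_rw_step_F_eq: "rw_step\<^sup>*\<^sup>* u v \<Longrightarrow> F_eq (pos_word v) (pos_word u)"
  by (induction rule: rtranclp_induct) (auto intro: F_eq.refl F_eq.trans rw_step_F_eq)

lemma rtranclp_rw_step_positive:
  "rw_step\<^sup>*\<^sup>* u v \<Longrightarrow> \<forall>i\<in>set u. 1 \<le> i \<Longrightarrow> \<forall>i\<in>set v. 1 \<le> i"
  by (induction rule: rtranclp_induct) (auto simp: rw_step_def)

lemma rw_step_irreducible_anti_normal:
  assumes "\<forall>i\<in>set v. 1 \<le> i" and irreducible: "\<not> (\<exists>v'. rw_step v v')"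
  shows "anti_normal v"
  unfolding anti_normal_def
proof (intro conjI allI impI assms(1))
  fix i assume i: "Suc i < length v"
  have "v = take i v @ [v ! i, v ! Suc i] @ drop (Suc (Suc i)) v"
    using i by (metis Cons_nth_drop_Suc Suc_lessD append_Cons append_Nil append_take_drop_id)
  then have "\<not> v ! i + 1 < v ! Suc i"
    using irreducible unfolding rw_step_def by blast
  then show "int (v ! Suc i) - 1 \<le> int (v ! i)" by simp
qed

theorem theorem4p1p10:
  fixes w :: "nat list"
  assumes "\<forall>i\<in>set w. 1 \<le> i"
  shows "(\<forall>s v. (rw_step ^^ s) w v \<longrightarrow> s \<le> length w choose 2)
       \<and> (\<forall>v. rw_step\<^sup>*\<^sup>* w v \<and> \<not> (\<exists>v'. rw_step v v')
              \<longrightarrow> anti_normal v \<and> F_eq (pos_word v) (pos_word w))"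
proof (intro conjI allI impI)
  show "s \<le> length w choose 2" if "(rw_step ^^ s) w v" for s v
    using that by (rule relpowp_rw_step_le_choose_2)
  fix v assume v: "rw_step\<^sup>*\<^sup>* w v \<and> \<not> (\<exists>v'. rw_step v v')"
  then show "F_eq (pos_word v) (pos_word w)" by (simp add: rtranclp_rw_step_F_eq)
  show "anti_normal v"
    using v assms rtranclp_rw_step_positive rw_step_irreducible_anti_normal by blast
qed

end
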